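(* Let $G = K_m \otimes K_n$ with $m \geq 3$ and $m \leq n \leq 2m-2$. Then $\dim(G) \geq \left\lceil \frac{2}{3}(m+n-2) \right\rceil$.
   Context: $K_r$ is the complete graph on $r$ vertices. The tensor product $G\otimes H$ has vertex set $V(G)\times V(H)$, with $(u,v)$ adjacent to $(x,y)$ iff $ux\in E(G)$ and $vy\in E(H)$. For a connected graph and an ordered set $W=\{w_1,\dots,w_k\}$ of vertices, $r(v\mid W)=(d(v,w_1),\dots,d(v,w_k))$; $W$ is resolving if distinct vertices have distinct representations; $\dim(G)$ is the minimum size of a resolving set. *)

theory Defs
  imports Complex_Main
begin

fun walk_len :: "'a set \<Rightarrow> ('a \<Rightarrow> 'a \<Rightarrow> bool) \<Rightarrow> nat \<Rightarrow> 'a \<Rightarrow> 'a \<Rightarrow> bool" where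
  "walk_len V E 0 u v = (u \<in> V \<and> u = v)"
| "walk_len V E (Suc k) u v = (u \<in> V \<and> (\<exists>w. E u w \<and> walk_len V E k w v))"

text \<open>Graph distance: length of a shortest walk (used only for connected graphs).\<close>
definition dist :: "'a set \<Rightarrow> ('a \<Rightarrow> 'a \<Rightarrow> bool) \<Rightarrow> 'a \<Rightarrow> 'a \<Rightarrow> nat" where
  "dist V E u v = (LEAST k. walk_len V E k u v)"

definition connected_graph :: "'a set \<Rightarrow> ('a \<Rightarrow> 'a \<Rightarrow> bool) \<Rightarrow> bool" where
  "connected_graph V E \<longleftrightarrow> (\<forall>u\<in>V. \<forall>v\<in>V. \<exists>k. walk_len V E k u v)"

definition resolving :: "'a set \<Rightarrow> ('a \<Rightarrow> 'a \<Rightarrow> bool) \<Rightarrow> 'a set \<Rightarrow> bool" where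
  "resolving V E W \<longleftrightarrow> W \<subseteq> V \<and>
     (\<forall>u\<in>V. \<forall>v\<in>V. (\<forall>w\<in>W. dist V E u w = dist V E v w) \<longrightarrow> u = v)"

definition metric_dim :: "'a set \<Rightarrow> ('a \<Rightarrow> 'a \<Rightarrow> bool) \<Rightarrow> nat" where
  "metric_dim V E = (LEAST k. \<exists>W. finite W \<and> card W = k \<and> resolving V E W)"

definition K_verts :: "nat \<Rightarrow> nat set" where "K_verts r = {0..<r}"
definition K_adj :: "nat \<Rightarrow> nat \<Rightarrow> bool" where "K_adj x y \<longleftrightarrow> x \<noteq> y"

definition tensor_verts :: "'a set \<Rightarrow> 'b set \<Rightarrow> ('a \<times> 'b) set" where
  "tensor_verts V1 V2 = V1 \<times> V2"
definition tensor_adj :: "('a \<Rightarrow> 'a \<Rightarrow> bool) \<Rightarrow> ('b \<Rightarrow> 'b \<Rightarrow> bool) \<Rightarrow> ('a \<times> 'b) \<Rightarrow> ('a \<times> 'b) \<Rightarrow> bool" where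
  "tensor_adj E1 E2 p q \<longleftrightarrow> E1 (fst p) (fst q) \<and> E2 (snd p) (snd q)"

end

theory Submission
  imports Defs
begin

text \<open>In \<open>K\<^sub>m \<otimes> K\<^sub>n\<close> two distinct vertices are at distance 1 unless they share a row or a
  column, in which case they are at distance 2. So a resolving set \<open>W\<close> must separate the
  vertices outside \<open>W\<close> by the pattern of rows and columns they share with \<open>W\<close>. This forces
  \<open>W\<close> to meet all rows but one and all columns but one. Counting elements of \<open>W\<close> alone in
  their row or column gives \<open>2(|rows of W| + |columns of W|) \<le> 3|W| + L\<close>, where \<open>L\<close> is the
  number of elements alone in both; \<open>L \<le> 1\<close>, and \<open>L = 0\<close> if a row and a column are both
  missed. Either way \<open>2(m + n) \<le> 3|W| + 4\<close>.\<close>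

lemma card_eq_sum_card_fibres:
  assumes "finite S" "finite T" "f ` S \<subseteq> T"
  shows "card S = (\<Sum>y\<in>T. card {x\<in>S. f x = y})"
  using sum.group[OF assms, of "\<lambda>_. 1::nat"] by simp

definition solitary :: "('a \<Rightarrow> 'b) \<Rightarrow> 'a set \<Rightarrow> 'a set" where
  "solitary f W = {w\<in>W. \<forall>v\<in>W. f v = f w \<longrightarrow> v = w}"

lemma double_card_image_le:
  assumes "finite W"
  shows "2 * card (f ` W) \<le> card W + card (solitary f W)"
proof -
  have fin_img: "finite (f ` W)" using assms by simp
  have fin_sol: "finite (solitary f W)" using assms by (simp add: solitary_def)
  have "2 * card (f ` W) = (\<Sum>y\<in>f ` W. 2::nat)" by simp
  also have "\<dots> \<le> (\<Sum>y\<in>f ` W. card {x\<in>W. f x = y} + card {x\<in>solitary f W. f x = y})"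
  proof (rule sum_mono)
    fix y assume "y \<in> f ` W"
    then obtain w where w: "w \<in> W" "f w = y" by blast
    show "2 \<le> card {x\<in>W. f x = y} + card {x\<in>solitary f W. f x = y}"
    proof (cases "w \<in> solitary f W")
      case True
      then have "0 < card {x\<in>W. f x = y}" "0 < card {x\<in>solitary f W. f x = y}"
        using w assms fin_sol by (auto simp: card_gt_0_iff)
      then show ?thesis by simp
    next
      case False
      then obtain v where "v \<in> W" "f v = y" "v \<noteq> w" using w by (auto simp: solitary_def)
      then have "{v, w} \<subseteq> {x\<in>W. f x = y}" using w by auto
      then have "card {v, w} \<le> card {x\<in>W. f x = y}" using assms by (intro card_mono) auto
      then show ?thesis using \<open>v \<noteq> w\<close> by simp
    qed
  qed
  also have "\<dots> = card W + card (solitary f W)"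
    using card_eq_sum_card_fibres[OF assms fin_img, of f]
      card_eq_sum_card_fibres[OF fin_sol fin_img, of f]
    by (simp add: sum.distrib solitary_def image_mono)
  finally show ?thesis .
qed

definition same_line :: "'a \<times> 'b \<Rightarrow> 'a \<times> 'b \<Rightarrow> bool" where
  "same_line u w \<longleftrightarrow> fst u = fst w \<or> snd u = snd w"

definition line_separating :: "'a set \<Rightarrow> 'b set \<Rightarrow> ('a \<times> 'b) set \<Rightarrow> bool" where
  "line_separating A B W \<longleftrightarrow> W \<subseteq> A \<times> B \<and>
     (\<forall>u\<in>A \<times> B - W. \<forall>v\<in>A \<times> B - W. (\<forall>w\<in>W. same_line u w \<longleftrightarrow> same_line v w) \<longrightarrow> u = v)"

lemma line_separatingD:
  assumes "line_separating A B W" "u \<in> A \<times> B" "v \<in> A \<times> B" "u \<notin> W" "v \<notin> W"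
    and "\<And>w. w \<in> W \<Longrightarrow> same_line u w \<longleftrightarrow> same_line v w"
  shows "u = v"
  using assms(1) unfolding line_separating_def using assms(2-6) by (metis DiffI)

lemma line_separating_subset: "line_separating A B W \<Longrightarrow> W \<subseteq> A \<times> B"
  by (simp add: line_separating_def)

lemma line_separating_swap:
  assumes sep: "line_separating A B W"
  shows "line_separating B A (prod.swap ` W)"
  unfolding line_separating_def
proof (intro conjI ballI impI)
  show "prod.swap ` W \<subseteq> B \<times> A" using line_separating_subset[OF sep] by auto
  fix u v
  assume u: "u \<in> B \<times> A - prod.swap ` W" and v: "v \<in> B \<times> A - prod.swap ` W"
    and lines: "\<forall>w\<in>prod.swap ` W. same_line u w \<longleftrightarrow> same_line v w"
  have "prod.swap u = prod.swap v"
  proof (rule line_separatingD[OF sep])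
    fix w assume "w \<in> W"
    then show "same_line (prod.swap u) w \<longleftrightarrow> same_line (prod.swap v) w"
      using lines by (auto simp: same_line_def)
  qed (use u v in \<open>auto simp: image_iff\<close>)
  then show "u = v" by (metis swap_swap)
qed

lemma card_le_card_fst_image_Suc:
  assumes sep: "line_separating A B W" and "finite A" and "B \<noteq> {}"
  shows "card A \<le> Suc (card (fst ` W))"
proof -
  obtain b where b: "b \<in> B" using \<open>B \<noteq> {}\<close> by blast
  have "a = a'" if "a \<in> A - fst ` W" "a' \<in> A - fst ` W" for a a'
  proof -
    have "(a, b) = (a', b)"
      by (rule line_separatingD[OF sep]) (use that b in \<open>auto simp: same_line_def intro: rev_image_eqI\<close>)
    then show ?thesis by simp
  qed
  then have "card (A - fst ` W) \<le> Suc 0"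
    by (subst card_le_Suc0_iff_eq) (use \<open>finite A\<close> in auto)
  moreover have "fst ` W \<subseteq> A" using line_separating_subset[OF sep] by auto
  ultimately show ?thesis
    using card_Diff_subset[of "fst ` W" A] finite_subset[OF _ \<open>finite A\<close>] by fastforce
qed

lemma card_le_card_snd_image_Suc:
  assumes "line_separating A B W" and "finite B" and "A \<noteq> {}"
  shows "card B \<le> Suc (card (snd ` W))"
  using card_le_card_fst_image_Suc[OF line_separating_swap[OF assms(1)] assms(2,3)]
  by (simp add: image_image)

lemma solitary_both_iff:
  assumes "x \<in> solitary fst W \<inter> solitary snd W" "w \<in> W"
  shows "fst x = fst w \<longleftrightarrow> w = x" and "snd x = snd w \<longleftrightarrow> w = x"
  using assms by (auto simp: solitary_def)

lemma card_solitary_both_le_1: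
  assumes sep: "line_separating A B W" and "finite W"
  shows "card (solitary fst W \<inter> solitary snd W) \<le> 1"
proof -
  have "x = y" if x: "x \<in> solitary fst W \<inter> solitary snd W" and y: "y \<in> solitary fst W \<inter> solitary snd W"
    for x y
  proof (rule ccontr)
    assume "x \<noteq> y"
    have W: "x \<in> W" "y \<in> W" using x y by (auto simp: solitary_def)
    have ne: "fst y \<noteq> fst x" "snd y \<noteq> snd x"
      using solitary_both_iff[OF x W(2)] \<open>x \<noteq> y\<close> by auto
    \<comment> \<open>The two remaining corners of the rectangle spanned by \<open>x\<close> and \<open>y\<close> share a line
      with exactly \<open>x\<close> and \<open>y\<close>.\<close>
    define u where "u = (fst x, snd y)"
    define v where "v = (fst y, snd x)"
    have lines: "same_line u w \<longleftrightarrow> w = x \<or> w = y" "same_line v w \<longleftrightarrow> w = x \<or> w = y"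
      if "w \<in> W" for w
      using solitary_both_iff[OF x that] solitary_both_iff[OF y that]
      by (auto simp: u_def v_def same_line_def)
    have "u \<in> A \<times> B" "v \<in> A \<times> B"
      using W line_separating_subset[OF sep] by (auto simp: u_def v_def mem_Times_iff)
    moreover have "u \<notin> W"
    proof
      assume "u \<in> W"
      then have "u = x \<or> u = y" using lines(1)[of u] by (simp add: same_line_def)
      then show False using ne by (auto simp: u_def prod_eq_iff)
    qed
    moreover have "v \<notin> W"
    proof
      assume "v \<in> W"
      then have "v = x \<or> v = y" using lines(2)[of v] by (simp add: same_line_def)
      then show False using ne by (auto simp: v_def prod_eq_iff)
    qed
    ultimately have "u = v" by (rule line_separatingD[OF sep]) (simp add: lines)
    then show False using ne by (simp add: u_def v_def prod_eq_iff)
  qed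
  moreover have "finite (solitary fst W \<inter> solitary snd W)"
    using \<open>finite W\<close> by (simp add: solitary_def)
  ultimately show ?thesis using card_le_Suc0_iff_eq by (metis One_nat_def)
qed

lemma solitary_both_empty:
  assumes sep: "line_separating A B W" and "fst ` W \<noteq> A" and "snd ` W \<noteq> B"
  shows "solitary fst W \<inter> solitary snd W = {}"
proof (rule ccontr)
  assume "solitary fst W \<inter> solitary snd W \<noteq> {}"
  then obtain x where x: "x \<in> solitary fst W \<inter> solitary snd W" by blast
  have W: "W \<subseteq> A \<times> B" using line_separating_subset[OF sep] .
  then have "fst ` W \<subseteq> A" "snd ` W \<subseteq> B" by auto
  then obtain a b where a: "a \<in> A" "a \<notin> fst ` W" and b: "b \<in> B" "b \<notin> snd ` W"
    using assms(2,3) by blast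
  have xW: "x \<in> W" using x by (simp add: solitary_def)
  \<comment> \<open>Both \<open>(a, snd x)\<close> and \<open>(fst x, b)\<close> share a line with \<open>x\<close> only.\<close>
  have "(a, snd x) \<in> A \<times> B" "(fst x, b) \<in> A \<times> B" using a b xW W by auto
  moreover have "(a, snd x) \<notin> W" "(fst x, b) \<notin> W" using a b by force+
  ultimately have "(a, snd x) = (fst x, b)"
  proof (rule line_separatingD[OF sep])
    fix w assume w: "w \<in> W"
    have "a \<noteq> fst w" "b \<noteq> snd w" using w a b by force+
    then show "same_line (a, snd x) w \<longleftrightarrow> same_line (fst x, b) w"
      using solitary_both_iff[OF x w] by (simp add: same_line_def)
  qed
  then show False using a xW by force
qed

lemma line_separating_card_bound:
  assumes sep: "line_separating A B W" and "finite A" "finite B" "A \<noteq> {}" "B \<noteq> {}"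
  shows "2 * (card A + card B) \<le> 3 * card W + 4"
proof -
  have fin: "finite W"
    using line_separating_subset[OF sep] assms(2,3) finite_subset by blast
  define L where "L = solitary fst W \<inter> solitary snd W"
  have "card (solitary fst W) + card (solitary snd W) \<le> card W + card L"
    using card_Un_Int[of "solitary fst W" "solitary snd W"]
      card_mono[OF fin, of "solitary fst W \<union> solitary snd W"] fin
    by (simp add: L_def solitary_def)
  then have count: "2 * (card (fst ` W) + card (snd ` W)) \<le> 3 * card W + card L"
    using double_card_image_le[OF fin, of fst] double_card_image_le[OF fin, of snd] by simp
  have rows: "card A \<le> Suc (card (fst ` W))" and cols: "card B \<le> Suc (card (snd ` W))"
    using card_le_card_fst_image_Suc[OF sep] card_le_card_snd_image_Suc[OF sep] assms by simp_all
  show ?thesis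
  proof (cases "fst ` W = A \<or> snd ` W = B")
    case True
    then have "card A + card B \<le> Suc (card (fst ` W) + card (snd ` W))" using rows cols by auto
    moreover have "card L \<le> 1" unfolding L_def by (rule card_solitary_both_le_1[OF sep fin])
    ultimately show ?thesis using count by arith
  next
    case False
    then have "L = {}" unfolding L_def by (intro solitary_both_empty[OF sep]) auto
    then show ?thesis using count rows cols by simp
  qed
qed

lemma dist_eqI:
  assumes "walk_len V E k u v" and "\<And>j. j < k \<Longrightarrow> \<not> walk_len V E j u v"
  shows "dist V E u v = k"
  unfolding dist_def by (rule Least_equality) (use assms in \<open>auto simp: not_le[symmetric]\<close>)

lemma dist_eq_0_iff:
  assumes "connected_graph V E" "u \<in> V" "v \<in> V"
  shows "dist V E u v = 0 \<longleftrightarrow> u = v"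
proof
  assume "dist V E u v = 0"
  moreover obtain k where "walk_len V E k u v" using assms by (auto simp: connected_graph_def)
  ultimately have "walk_len V E 0 u v" unfolding dist_def by (metis LeastI)
  then show "u = v" by simp
qed (use assms in \<open>auto intro: dist_eqI\<close>)

lemma connected_graph_resolving_self:
  assumes "connected_graph V E"
  shows "resolving V E V"
  unfolding resolving_def
proof (intro conjI ballI impI subset_refl)
  fix u v assume "u \<in> V" "v \<in> V" and "\<forall>w\<in>V. dist V E u w = dist V E v w"
  then have "dist V E v u = dist V E u u" by simp
  then show "u = v" using dist_eq_0_iff[OF assms] \<open>u \<in> V\<close> \<open>v \<in> V\<close> by metis
qed

lemma metric_dim_geI:
  assumes "finite V" "connected_graph V E"
    and "\<And>W. finite W \<Longrightarrow> resolving V E W \<Longrightarrow> k \<le> card W"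
  shows "k \<le> metric_dim V E"
  unfolding metric_dim_def
  by (rule LeastI2_ex) (use assms connected_graph_resolving_self in blast)+

lemma ex_less_avoiding_two: "3 \<le> (m::nat) \<Longrightarrow> \<exists>c<m. c \<noteq> a \<and> c \<noteq> a'"
  by presburger

lemma tensor_K_adj_iff: "tensor_adj K_adj K_adj u v \<longleftrightarrow> \<not> same_line u v"
  by (simp add: tensor_adj_def K_adj_def same_line_def)

lemma tensor_K_walk_2:
  assumes "3 \<le> m" "3 \<le> n" and "u \<in> {0..<m} \<times> {0..<n}" "v \<in> {0..<m} \<times> {0..<n}"
  shows "walk_len ({0..<m} \<times> {0..<n}) (tensor_adj K_adj K_adj) 2 u v"
proof -
  obtain c where "c < m" "c \<noteq> fst u" "c \<noteq> fst v" using ex_less_avoiding_two[OF assms(1)] by blast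
  moreover obtain d where "d < n" "d \<noteq> snd u" "d \<noteq> snd v" using ex_less_avoiding_two[OF assms(2)] by blast
  ultimately have "(c, d) \<in> {0..<m} \<times> {0..<n}" "tensor_adj K_adj K_adj u (c, d)"
      "tensor_adj K_adj K_adj (c, d) v"
    using assms(3,4) by (auto simp: tensor_K_adj_iff same_line_def)
  then show ?thesis
    unfolding numeral_2_eq_2 walk_len.simps using assms(3,4) by blast
qed

lemma tensor_K_dist:
  assumes "3 \<le> m" "3 \<le> n" and "u \<in> {0..<m} \<times> {0..<n}" "v \<in> {0..<m} \<times> {0..<n}" "u \<noteq> v"
  shows "dist ({0..<m} \<times> {0..<n}) (tensor_adj K_adj K_adj) u v = (if same_line u v then 2 else 1)"
proof (cases "same_line u v")
  case True
  then show ?thesis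
    using assms by (auto intro!: dist_eqI tensor_K_walk_2 simp: less_2_cases_iff tensor_K_adj_iff)
next
  case False
  then show ?thesis
    using assms by (auto intro!: dist_eqI simp: tensor_K_adj_iff)
qed

lemma tensor_K_connected:
  assumes "3 \<le> m" "3 \<le> n"
  shows "connected_graph ({0..<m} \<times> {0..<n}) (tensor_adj K_adj K_adj)"
  unfolding connected_graph_def using tensor_K_walk_2[OF assms] by blast

lemma tensor_K_resolving_line_separating:
  assumes "3 \<le> m" "3 \<le> n" and res: "resolving ({0..<m} \<times> {0..<n}) (tensor_adj K_adj K_adj) W"
  shows "line_separating {0..<m} {0..<n} W"
  unfolding line_separating_def
proof (intro conjI ballI impI)
  show WV: "W \<subseteq> {0..<m} \<times> {0..<n}" using res unfolding resolving_def by (rule conjunct1)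
  fix u v assume u: "u \<in> {0..<m} \<times> {0..<n} - W" and v: "v \<in> {0..<m} \<times> {0..<n} - W"
    and lines: "\<forall>w\<in>W. same_line u w \<longleftrightarrow> same_line v w"
  have "dist ({0..<m} \<times> {0..<n}) (tensor_adj K_adj K_adj) u w
      = dist ({0..<m} \<times> {0..<n}) (tensor_adj K_adj K_adj) v w" if w: "w \<in> W" for w
  proof -
    have "w \<in> {0..<m} \<times> {0..<n}" "u \<noteq> w" "v \<noteq> w" using WV u v w by auto
    then show ?thesis using tensor_K_dist[OF assms(1,2)] u v lines w by simp
  qed
  then show "u = v" using res u v unfolding resolving_def by blast
qed

theorem lemma3p5:
  fixes m n :: nat
  assumes "m \<ge> 3" and "m \<le> n" and "n \<le> 2 * m - 2"
  shows "metric_dim (tensor_verts (K_verts m) (K_verts n)) (tensor_adj K_adj K_adj)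
           \<ge> nat (ceiling ((2 / 3 :: real) * (real m + real n - 2)))"
proof -
  have "3 \<le> n" using assms(1,2) by simp
  have grid: "tensor_verts (K_verts m) (K_verts n) = {0..<m} \<times> {0..<n}"
    by (simp add: tensor_verts_def K_verts_def)
  have "nat (ceiling ((2 / 3 :: real) * (real m + real n - 2))) \<le> card W"
    if "resolving ({0..<m} \<times> {0..<n}) (tensor_adj K_adj K_adj) W" for W
  proof -
    have "line_separating {0..<m} {0..<n} W"
      using tensor_K_resolving_line_separating[OF assms(1) \<open>3 \<le> n\<close> that] .
    from line_separating_card_bound[OF this] have "2 * (m + n) \<le> 3 * card W + 4"
      using assms(1) \<open>3 \<le> n\<close> by simp
    then have "real (2 * (m + n)) \<le> real (3 * card W + 4)" by linarith
    then have "(2 / 3 :: real) * (real m + real n - 2) \<le> real (card W)" by simp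
    then have "ceiling ((2 / 3 :: real) * (real m + real n - 2)) \<le> int (card W)"
      by (simp add: ceiling_le_iff)
    then show ?thesis by (simp only: nat_le_iff)
  qed
  then show ?thesis
    unfolding grid by (intro metric_dim_geI tensor_K_connected[OF assms(1) \<open>3 \<le> n\<close>]) simp_all
qed

end
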